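(* Let $(M,J)$ be an almost complex manifold (not necessarily integrable, not necessarily compact), and let $\phi^k:H^k_J(M)\to H^k_{dR}(M)$ be the natural map. Then $M$ satisfies the $\mathrm d\mathcal L_J$-lemma in degree $k$, i.e. $$(\operatorname{im}\mathcal L_J)^k\cap(\ker\mathrm d)^k=(\operatorname{im}\mathrm d\mathcal L_J)^k,$$ if and only if $\phi^k$ is injective and $\phi^{k-1}$ is surjective.
   Context: For a vector-valued $k$-form $K=K^je_j$ on $M$, $\iota_K\alpha=K^j\wedge(\iota_{e_j}\alpha)$ and $\mathcal L_K=\iota_K\mathrm d-(-1)^{k-1}\mathrm d\iota_K$. For an almost complex structure $J$ ($J^2=-I$), $\mathcal L_J$ has degree $1$ and $\mathrm d\mathcal L_J=-\mathcal L_J\mathrm d$, so $\mathrm d$ preserves $(\ker\mathcal L_J)^k=\{\alpha\in\Omega^k(M):\mathcal L_J\alpha=0\}$; $H^k_J(M)$ is the $k$-th cohomology of $((\ker\mathcal L_J)^\bullet,\mathrm d)$ and $\phi^k$ is induced by the inclusion into $\Omega^\bullet(M)$. Notation (real forms): $(\operatorname{im}\mathcal L_J)^k=\mathcal L_J(\Omega^{k-1}(M))$, $(\operatorname{im}\mathrm d\mathcal L_J)^k=\mathrm d\mathcal L_J(\Omega^{k-2}(M))$, $(\ker\mathrm d)^k$ the closed $k$-forms. *)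

theory Defs
  imports "HOL-Analysis.Analysis"
begin

text \<open>Abstract model of the complex of real differential forms on M:
  the total space of forms is a real vector space 'a, Om k is the subspace of k-forms
  (Om k = {0} for k < 0), d is the exterior derivative and L stands for \<L>_J.\<close>

definition forms_complex ::
  "(int \<Rightarrow> 'a::real_vector set) \<Rightarrow> ('a \<Rightarrow> 'a) \<Rightarrow> ('a \<Rightarrow> 'a) \<Rightarrow> bool" where
  "forms_complex Om d L \<longleftrightarrow>
     linear d \<and> linear L \<and>
     (\<forall>k. subspace (Om k)) \<and>
     (\<forall>k<0. Om k = {0}) \<and>
     (\<forall>k. d ` Om k \<subseteq> Om (k + 1)) \<and>
     (\<forall>k. L ` Om k \<subseteq> Om (k + 1)) \<and>
     (\<forall>k. \<forall>a\<in>Om k. d (d a) = 0) \<and>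
     (\<forall>k. \<forall>a\<in>Om k. d (L a) = - L (d a))"

definition cls :: "'a::real_vector \<Rightarrow> 'a set \<Rightarrow> 'a set" where
  "cls a S = (\<lambda>b. a + b) ` S"

definition kerL :: "(int \<Rightarrow> 'a::real_vector set) \<Rightarrow> ('a \<Rightarrow> 'a) \<Rightarrow> int \<Rightarrow> 'a set" where
  "kerL Om L k = {a \<in> Om k. L a = 0}"

definition HdR :: "(int \<Rightarrow> 'a::real_vector set) \<Rightarrow> ('a \<Rightarrow> 'a) \<Rightarrow> int \<Rightarrow> 'a set set" where
  "HdR Om d k = (\<lambda>a. cls a (d ` Om (k - 1))) ` {a \<in> Om k. d a = 0}"

definition HJ :: "(int \<Rightarrow> 'a::real_vector set) \<Rightarrow> ('a \<Rightarrow> 'a) \<Rightarrow> ('a \<Rightarrow> 'a) \<Rightarrow> int \<Rightarrow> 'a set set" where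
  "HJ Om d L k = (\<lambda>a. cls a (d ` kerL Om L (k - 1))) ` {a \<in> kerL Om L k. d a = 0}"

text \<open>phi^k : H^k_J \<rightarrow> H^k_dR induced by inclusion: send a class to the de Rham
  class of (any) representative.\<close>
definition phi :: "(int \<Rightarrow> 'a::real_vector set) \<Rightarrow> ('a \<Rightarrow> 'a) \<Rightarrow> int \<Rightarrow> 'a set \<Rightarrow> 'a set" where
  "phi Om d k C = cls (SOME a. a \<in> C) (d ` Om (k - 1))"

end

theory Submission
  imports Defs
begin

text \<open>If the \<open>dL\<close>-lemma holds in degree \<open>k\<close> and \<open>b\<close> is a \<open>(k-1)\<close>-form
  with \<open>L b\<close> closed, then \<open>L b = d L c\<close>, so \<open>b + d c\<close> lies in \<open>ker L\<close>: \<open>b\<close> can be moved into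
  \<open>ker L\<close> without changing \<open>d b\<close> or the de Rham class of \<open>b\<close>. Applied to a primitive \<open>b\<close> of an
  exact form in \<open>ker L\<close> this gives injectivity of \<open>\<phi>\<^sup>k\<close>; applied to a closed \<open>b\<close> (for which
  \<open>d L b = - L d b = 0\<close>) it gives surjectivity of \<open>\<phi>\<^bsup>k-1\<^esup>\<close>.
  Conversely, let \<open>L b\<close> be closed. Then \<open>d b\<close> lies in \<open>ker L\<close> and is exact, so by injectivity
  \<open>d b = d c\<close> with \<open>c \<in> ker L\<close>; by surjectivity the closed form \<open>b - c\<close> is \<open>c' + d x\<close> with
  \<open>c' \<in> ker L\<close>, whence \<open>L b = L (b - c) = L d x = d L (-x)\<close>.\<close>

lemma cls_eq_iff:
  assumes "subspace E"
  shows "cls x E = cls y E \<longleftrightarrow> x - y \<in> E"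
proof
  assume "cls x E = cls y E"
  then have "x \<in> cls y E"
    using subspace_0[OF assms] unfolding cls_def by (metis add.right_neutral image_eqI)
  then show "x - y \<in> E" unfolding cls_def by auto
next
  assume "x - y \<in> E"
  then have "\<And>e. e \<in> E \<Longrightarrow> (x - y) + e \<in> E \<and> (y - x) + e \<in> E"
    using assms by (metis minus_diff_eq subspace_add subspace_neg)
  then show "cls x E = cls y E" unfolding cls_def
    by (force simp: algebra_simps image_iff)
qed

context
  fixes Om :: "int \<Rightarrow> 'a::real_vector set" and d L :: "'a \<Rightarrow> 'a"
  assumes complex: "forms_complex Om d L"
begin

lemma linear_d: "linear d"
  and linear_L: "linear L"
  and subspace_Om: "subspace (Om j)"
  and d_d: "a \<in> Om j \<Longrightarrow> d (d a) = 0"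
  and d_L: "a \<in> Om j \<Longrightarrow> d (L a) = - L (d a)"
  using complex unfolding forms_complex_def by auto

lemma d_mem: "a \<in> Om (j - 1) \<Longrightarrow> d a \<in> Om j"
  and L_mem: "a \<in> Om (j - 1) \<Longrightarrow> L a \<in> Om j"
  using complex unfolding forms_complex_def by (metis diff_add_cancel image_subset_iff)+

lemma subspace_kerL: "subspace (kerL Om L j)"
proof -
  have "kerL Om L j = Om j \<inter> {a. L a = 0}" unfolding kerL_def by auto
  then show ?thesis
    using subspace_Om linear_subspace_kernel[OF linear_L] by (simp add: subspace_inter)
qed

lemma subspace_exact: "subspace (d ` Om j)"
  and subspace_d_kerL: "subspace (d ` kerL Om L j)"
  using linear_subspace_image[OF linear_d] subspace_Om subspace_kerL by auto

lemma phi_cls: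
  assumes "a \<in> Om j"
  shows "phi Om d j (cls a (d ` kerL Om L (j - 1))) = cls a (d ` Om (j - 1))"
proof -
  let ?C = "cls a (d ` kerL Om L (j - 1))"
  have "a \<in> ?C" unfolding cls_def using subspace_0[OF subspace_d_kerL] by force
  then have "(SOME x. x \<in> ?C) \<in> ?C" by (rule someI)
  then obtain u where u: "u \<in> kerL Om L (j - 1)" "(SOME x. x \<in> ?C) = a + d u"
    unfolding cls_def by auto
  then have "d u \<in> d ` Om (j - 1)" unfolding kerL_def by blast
  then show ?thesis unfolding phi_def u(2) by (simp add: cls_eq_iff[OF subspace_exact])
qed

lemma inj_on_phi_iff:
  "inj_on (phi Om d j) (HJ Om d L j) \<longleftrightarrow>
    (\<forall>g\<in>kerL Om L j. d g = 0 \<longrightarrow> g \<in> d ` Om (j - 1) \<longrightarrow> g \<in> d ` kerL Om L (j - 1))"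
  (is "_ \<longleftrightarrow> ?exact_in_kerL")
proof
  assume inj: "inj_on (phi Om d j) (HJ Om d L j)"
  show ?exact_in_kerL
  proof (intro ballI impI)
    fix g assume g: "g \<in> kerL Om L j" "d g = 0" "g \<in> d ` Om (j - 1)"
    have "0 \<in> kerL Om L j" using subspace_0[OF subspace_kerL] .
    then have classes: "cls g (d ` kerL Om L (j - 1)) \<in> HJ Om d L j"
      "cls 0 (d ` kerL Om L (j - 1)) \<in> HJ Om d L j"
      unfolding HJ_def using g linear_0[OF linear_d] by auto
    have "g \<in> Om j" "0 \<in> Om j" using g(1) subspace_0[OF subspace_Om] unfolding kerL_def by auto
    then have "phi Om d j (cls g (d ` kerL Om L (j - 1))) = phi Om d j (cls 0 (d ` kerL Om L (j - 1)))"
      using g(3) by (simp add: phi_cls cls_eq_iff[OF subspace_exact])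
    then have "cls g (d ` kerL Om L (j - 1)) = cls 0 (d ` kerL Om L (j - 1))"
      using inj classes by (meson inj_onD)
    then show "g \<in> d ` kerL Om L (j - 1)" by (simp add: cls_eq_iff[OF subspace_d_kerL])
  qed
next
  assume exact_in_kerL: ?exact_in_kerL
  show "inj_on (phi Om d j) (HJ Om d L j)"
  proof (rule inj_onI)
    fix C1 C2 assume "C1 \<in> HJ Om d L j" "C2 \<in> HJ Om d L j"
      and eq: "phi Om d j C1 = phi Om d j C2"
    then obtain a1 a2 where a: "a1 \<in> kerL Om L j" "d a1 = 0" "C1 = cls a1 (d ` kerL Om L (j - 1))"
      "a2 \<in> kerL Om L j" "d a2 = 0" "C2 = cls a2 (d ` kerL Om L (j - 1))"
      unfolding HJ_def by auto
    have "a1 \<in> Om j" "a2 \<in> Om j" using a(1,4) unfolding kerL_def by auto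
    then have "cls a1 (d ` Om (j - 1)) = cls a2 (d ` Om (j - 1))"
      using eq a(3,6) by (simp add: phi_cls)
    then have "a1 - a2 \<in> d ` Om (j - 1)" by (simp add: cls_eq_iff[OF subspace_exact])
    moreover have "a1 - a2 \<in> kerL Om L j" using subspace_diff[OF subspace_kerL a(1,4)] .
    moreover have "d (a1 - a2) = 0" using a linear_diff[OF linear_d] by simp
    ultimately have "a1 - a2 \<in> d ` kerL Om L (j - 1)" using exact_in_kerL by blast
    then show "C1 = C2" using a(3,6) by (simp add: cls_eq_iff[OF subspace_d_kerL])
  qed
qed

lemma phi_image_eq_HdR_iff:
  "phi Om d j ` HJ Om d L j = HdR Om d j \<longleftrightarrow>
    (\<forall>y\<in>Om j. d y = 0 \<longrightarrow> (\<exists>c\<in>kerL Om L j. d c = 0 \<and> y - c \<in> d ` Om (j - 1)))"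
  (is "_ \<longleftrightarrow> ?cohomologous_kerL")
proof -
  let ?dR = "\<lambda>a. cls a (d ` Om (j - 1))"
  have image: "phi Om d j ` HJ Om d L j = ?dR ` {a \<in> kerL Om L j. d a = 0}"
    unfolding HJ_def image_image by (rule image_cong[OF refl], rule phi_cls) (simp add: kerL_def)
  have HdR: "HdR Om d j = ?dR ` {a \<in> Om j. d a = 0}"
    unfolding HdR_def by (rule refl)
  have same_class: "?dR y = ?dR c \<longleftrightarrow> y - c \<in> d ` Om (j - 1)" for y c
    by (rule cls_eq_iff[OF subspace_exact])
  show ?thesis
  proof
    assume eq: "phi Om d j ` HJ Om d L j = HdR Om d j"
    show ?cohomologous_kerL
    proof (intro ballI impI)
      fix y assume y: "y \<in> Om j" "d y = 0"
      then have "?dR y \<in> HdR Om d j" unfolding HdR by (intro imageI) simp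
      then obtain c where "c \<in> kerL Om L j" "d c = 0" "?dR y = ?dR c"
        unfolding eq[symmetric] image by blast
      then show "\<exists>c\<in>kerL Om L j. d c = 0 \<and> y - c \<in> d ` Om (j - 1)"
        unfolding same_class by blast
    qed
  next
    assume cohomologous_kerL: ?cohomologous_kerL
    have "HdR Om d j \<subseteq> ?dR ` {a \<in> kerL Om L j. d a = 0}"
    proof
      fix C assume "C \<in> HdR Om d j"
      then obtain y where y: "y \<in> Om j" "d y = 0" "C = ?dR y" unfolding HdR by blast
      with cohomologous_kerL obtain c where c: "c \<in> kerL Om L j" "d c = 0" "y - c \<in> d ` Om (j - 1)"
        by blast
      have "C = ?dR c" using c(3) unfolding y(3) same_class .
      with c(1,2) show "C \<in> ?dR ` {a \<in> kerL Om L j. d a = 0}" by blast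
    qed
    moreover have "?dR ` {a \<in> kerL Om L j. d a = 0} \<subseteq> HdR Om d j"
      unfolding HdR kerL_def by (intro image_mono) blast
    ultimately show "phi Om d j ` HJ Om d L j = HdR Om d j"
      unfolding image by (rule subset_antisym[rotated])
  qed
qed

lemma dL_image_subset_im_L_closed:
  "(\<lambda>a. d (L a)) ` Om (k - 2) \<subseteq> L ` Om (k - 1) \<inter> {a \<in> Om k. d a = 0}"
proof
  fix a assume "a \<in> (\<lambda>a. d (L a)) ` Om (k - 2)"
  then obtain x where x: "x \<in> Om (k - 2)" "a = d (L x)" by auto
  then have "d x \<in> Om (k - 1)" "L x \<in> Om (k - 1)"
    using d_mem[of x "k - 1"] L_mem[of x "k - 1"] by simp_all
  then have "a \<in> Om k" "d a = 0" using x(2) d_mem[of "L x" k] d_d by simp_all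
  moreover have "a = L (- d x)" using x d_L linear_neg[OF linear_L] by simp
  ultimately show "a \<in> L ` Om (k - 1) \<inter> {a \<in> Om k. d a = 0}"
    using \<open>d x \<in> Om (k - 1)\<close> subspace_neg[OF subspace_Om] by blast
qed

lemma move_into_kerL:
  assumes dL_lemma: "L ` Om (k - 1) \<inter> {a \<in> Om k. d a = 0} \<subseteq> (\<lambda>a. d (L a)) ` Om (k - 2)"
    and b: "b \<in> Om (k - 1)" "d (L b) = 0"
  obtains c where "c \<in> Om (k - 2)" "b + d c \<in> kerL Om L (k - 1)"
proof -
  have "L b \<in> Om k" using L_mem[of b k] b(1) by simp
  then obtain c where c: "c \<in> Om (k - 2)" "L b = d (L c)" using dL_lemma b by blast
  then have "d c \<in> Om (k - 1)" using d_mem[of c "k - 1"] by simp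
  moreover have "L (b + d c) = 0" using c d_L linear_add[OF linear_L] by simp
  ultimately have "b + d c \<in> kerL Om L (k - 1)"
    unfolding kerL_def using subspace_add[OF subspace_Om b(1)] by simp
  with c(1) show thesis by (rule that)
qed

lemma exact_in_kerL_of_dL_lemma:
  assumes dL_lemma: "L ` Om (k - 1) \<inter> {a \<in> Om k. d a = 0} \<subseteq> (\<lambda>a. d (L a)) ` Om (k - 2)"
    and g: "g \<in> kerL Om L k" "g \<in> d ` Om (k - 1)"
  shows "g \<in> d ` kerL Om L (k - 1)"
proof -
  obtain b where b: "b \<in> Om (k - 1)" "g = d b" using g(2) by auto
  then have "d (L b) = 0" using g(1) d_L unfolding kerL_def by simp
  then obtain c where c: "c \<in> Om (k - 2)" "b + d c \<in> kerL Om L (k - 1)"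
    using move_into_kerL[OF dL_lemma b(1)] by blast
  have "d (b + d c) = g" using b c(1) d_d linear_add[OF linear_d] by simp
  with c(2) show ?thesis by force
qed

lemma closed_cohomologous_kerL_of_dL_lemma:
  assumes dL_lemma: "L ` Om (k - 1) \<inter> {a \<in> Om k. d a = 0} \<subseteq> (\<lambda>a. d (L a)) ` Om (k - 2)"
    and y: "y \<in> Om (k - 1)" "d y = 0"
  shows "\<exists>c\<in>kerL Om L (k - 1). d c = 0 \<and> y - c \<in> d ` Om (k - 2)"
proof -
  have "d (L y) = 0" using y d_L linear_0[OF linear_L] by simp
  then obtain c where c: "c \<in> Om (k - 2)" "y + d c \<in> kerL Om L (k - 1)"
    using move_into_kerL[OF dL_lemma y(1)] by blast
  moreover have "d (y + d c) = 0" using y c(1) d_d linear_add[OF linear_d] by simp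
  moreover have "y - (y + d c) = d (- c)" using linear_neg[OF linear_d] by simp
  ultimately show ?thesis using subspace_neg[OF subspace_Om c(1)] by blast
qed

lemma dL_lemma_of_exact_in_kerL_closed_cohomologous_kerL:
  assumes exact_in_kerL:
      "\<And>g. g \<in> kerL Om L k \<Longrightarrow> d g = 0 \<Longrightarrow> g \<in> d ` Om (k - 1) \<Longrightarrow> g \<in> d ` kerL Om L (k - 1)"
    and closed_cohomologous_kerL:
      "\<And>y. y \<in> Om (k - 1) \<Longrightarrow> d y = 0 \<Longrightarrow> \<exists>c\<in>kerL Om L (k - 1). d c = 0 \<and> y - c \<in> d ` Om (k - 2)"
  shows "L ` Om (k - 1) \<inter> {a \<in> Om k. d a = 0} \<subseteq> (\<lambda>a. d (L a)) ` Om (k - 2)"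
proof
  fix a assume "a \<in> L ` Om (k - 1) \<inter> {a \<in> Om k. d a = 0}"
  then obtain b where b: "b \<in> Om (k - 1)" "a = L b" "d a = 0" by auto
  have "L (d b) = 0" using b d_L by (metis neg_equal_0_iff_equal)
  then have "d b \<in> kerL Om L k" unfolding kerL_def using d_mem[of b k] b(1) by simp
  then obtain c where c: "c \<in> kerL Om L (k - 1)" "d b = d c"
    using exact_in_kerL d_d b(1) by blast
  then have c': "c \<in> Om (k - 1)" "L c = 0" unfolding kerL_def by auto
  have "b - c \<in> Om (k - 1)" using subspace_diff[OF subspace_Om b(1) c'(1)] .
  moreover have "d (b - c) = 0" using c(2) linear_diff[OF linear_d] by simp
  ultimately have "\<exists>c''\<in>kerL Om L (k - 1). d c'' = 0 \<and> b - c - c'' \<in> d ` Om (k - 2)"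
    by (rule closed_cohomologous_kerL)
  then obtain c'' x where c'': "c'' \<in> kerL Om L (k - 1)" "x \<in> Om (k - 2)" "b - c - c'' = d x"
    by auto
  have "a = L (b - c - c'')"
    using b(2) c'(2) c''(1) linear_diff[OF linear_L] unfolding kerL_def by simp
  also have "\<dots> = d (L (- x))"
    using c''(2,3) d_L linear_neg[OF linear_L] linear_neg[OF linear_d] by simp
  finally show "a \<in> (\<lambda>a. d (L a)) ` Om (k - 2)" using subspace_neg[OF subspace_Om c''(2)] by blast
qed

lemma dL_lemma_iff:
  "L ` Om (k - 1) \<inter> {a \<in> Om k. d a = 0} \<subseteq> (\<lambda>a. d (L a)) ` Om (k - 2) \<longleftrightarrow>
    (\<forall>g\<in>kerL Om L k. d g = 0 \<longrightarrow> g \<in> d ` Om (k - 1) \<longrightarrow> g \<in> d ` kerL Om L (k - 1)) \<and>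
    (\<forall>y\<in>Om (k - 1). d y = 0 \<longrightarrow> (\<exists>c\<in>kerL Om L (k - 1). d c = 0 \<and> y - c \<in> d ` Om (k - 2)))"
  (is "?dL_lemma \<longleftrightarrow> ?exact_in_kerL \<and> ?closed_cohomologous_kerL")
proof
  assume dL_lemma: ?dL_lemma
  show "?exact_in_kerL \<and> ?closed_cohomologous_kerL"
  proof (intro conjI ballI impI)
    fix g assume "g \<in> kerL Om L k" "g \<in> d ` Om (k - 1)"
    with dL_lemma show "g \<in> d ` kerL Om L (k - 1)" by (rule exact_in_kerL_of_dL_lemma)
  next
    fix y assume "y \<in> Om (k - 1)" "d y = 0"
    with dL_lemma show "\<exists>c\<in>kerL Om L (k - 1). d c = 0 \<and> y - c \<in> d ` Om (k - 2)"
      by (rule closed_cohomologous_kerL_of_dL_lemma)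
  qed
next
  assume "?exact_in_kerL \<and> ?closed_cohomologous_kerL"
  then show ?dL_lemma
    by (intro dL_lemma_of_exact_in_kerL_closed_cohomologous_kerL) (simp_all only: Ball_def)
qed

end

theorem theorem3p18:
  fixes Om :: "int \<Rightarrow> 'a::real_vector set" and d L :: "'a \<Rightarrow> 'a" and k :: int
  assumes "forms_complex Om d L"
  shows "(L ` Om (k - 1) \<inter> {a \<in> Om k. d a = 0} = (\<lambda>a. d (L a)) ` Om (k - 2))
     \<longleftrightarrow> (inj_on (phi Om d k) (HJ Om d L k) \<and>
          phi Om d (k - 1) ` HJ Om d L (k - 1) = HdR Om d (k - 1))"
proof -
  have degree: "k - 1 - 1 = k - 2" by simp
  have "L ` Om (k - 1) \<inter> {a \<in> Om k. d a = 0} = (\<lambda>a. d (L a)) ` Om (k - 2) \<longleftrightarrow>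
      L ` Om (k - 1) \<inter> {a \<in> Om k. d a = 0} \<subseteq> (\<lambda>a. d (L a)) ` Om (k - 2)"
    using dL_image_subset_im_L_closed[OF assms, of k] by (simp only: set_eq_subset simp_thms)
  also have "\<dots> \<longleftrightarrow>
      (\<forall>g\<in>kerL Om L k. d g = 0 \<longrightarrow> g \<in> d ` Om (k - 1) \<longrightarrow> g \<in> d ` kerL Om L (k - 1)) \<and>
      (\<forall>y\<in>Om (k - 1). d y = 0 \<longrightarrow> (\<exists>c\<in>kerL Om L (k - 1). d c = 0 \<and> y - c \<in> d ` Om (k - 2)))"
    by (rule dL_lemma_iff[OF assms])
  also have "\<dots> \<longleftrightarrow> inj_on (phi Om d k) (HJ Om d L k) \<and>
      phi Om d (k - 1) ` HJ Om d L (k - 1) = HdR Om d (k - 1)"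
    using inj_on_phi_iff[OF assms, of k] phi_image_eq_HdR_iff[OF assms, of "k - 1"] degree
    by (simp only:)
  finally show ?thesis .
qed

end
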